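(* For $n\geq5$, \[\frac{n+2}{n}\leq \frac{\ell_{n-1}(n)}{\ell_{n-2}(n)}\leq \frac{4n+7}{4n-2}.\]
   Context: For $0\leq i\leq 2n$, $\ell_i(n)$ denotes the number of vectors in $\{0,1,2\}^n$ whose coordinates sum to $i$. *)

theory Defs
  imports Complex_Main "HOL-Library.FuncSet"
begin

definition ell :: "nat \<Rightarrow> nat \<Rightarrow> nat" where
  "ell i n = card {v \<in> {0..<n} \<rightarrow>\<^sub>E {0::nat, 1, 2}. (\<Sum>j\<in>{0..<n}. v j) = i}"

end

theory Submission
  imports Defs
begin

text \<open>
  \<open>ell i n\<close> is the coefficient of \<open>x\<^sup>i\<close> in \<open>(1 + x + x\<^sup>2)\<^sup>n\<close>. Comparing coefficients in
  \<open>(1 + x + x\<^sup>2) P' = n (1 + 2x) P\<close> gives, at the centre, \<open>n a\<^sub>n = b\<^sub>n + (n + 2) c\<^sub>n\<close> for the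
  coefficients \<open>a\<^sub>n, b\<^sub>n, c\<^sub>n\<close> of \<open>x\<^sup>n, x\<^sup>n\<^sup>-\<^sup>1, x\<^sup>n\<^sup>-\<^sup>2\<close>, so the claim is equivalent to
  bounds on \<open>t\<^sub>n = b\<^sub>n / a\<^sub>n\<close>. By symmetry and Pascal's rule, \<open>t\<^sub>n\<^sub>+\<^sub>1\<close> is a decreasing
  rational function of \<open>t\<^sub>n\<close>; it maps a slightly strengthened interval of bounds at \<open>n\<close>
  into the one at \<open>n + 1\<close>, which gives the bounds by induction from \<open>n = 5\<close>.
\<close>

lemma card_PiE_insert_Collect:
  assumes "x \<notin> S" "finite (T x)" "finite (Pi\<^sub>E S T)"
  shows "card {f \<in> Pi\<^sub>E (insert x S) T. P f} = (\<Sum>y\<in>T x. card {g \<in> Pi\<^sub>E S T. P (g(x := y))})"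
proof -
  have "{f \<in> Pi\<^sub>E (insert x S) T. P f}
      = (\<lambda>(y, g). g(x := y)) ` (SIGMA y:T x. {g \<in> Pi\<^sub>E S T. P (g(x := y))})"
    unfolding PiE_insert_eq by auto
  moreover have "inj_on (\<lambda>(y, g). g(x := y)) (SIGMA y:T x. {g \<in> Pi\<^sub>E S T. P (g(x := y))})"
    by (rule inj_on_subset[OF inj_combinator[OF assms(1)]]) auto
  ultimately show ?thesis
    using assms(2,3) by (simp add: card_image)
qed

text \<open>Integer indices make Pascal's rule hold without boundary cases.\<close>

definition trinom :: "nat \<Rightarrow> int \<Rightarrow> nat" where
  "trinom n i = card {v \<in> {0..<n} \<rightarrow>\<^sub>E {0::nat, 1, 2}. int (\<Sum>j\<in>{0..<n}. v j) = i}"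

lemma ell_eq_trinom: "ell i n = trinom n (int i)"
  unfolding ell_def trinom_def by (simp only: of_nat_eq_iff)

lemma trinom_0: "trinom 0 i = (if i = 0 then 1 else 0)"
  unfolding trinom_def by (auto simp: PiE_empty_domain)

lemma trinom_Suc: "trinom (Suc n) i = trinom n i + trinom n (i - 1) + trinom n (i - 2)"
proof -
  have sum_upd: "(\<Sum>j\<in>{0..<n}. (w(n := a)) j) = (\<Sum>j\<in>{0..<n}. w j)" for w :: "nat \<Rightarrow> nat" and a
    by (intro sum.cong) auto
  have "trinom (Suc n) i = (\<Sum>a\<in>{0::nat, 1, 2}. trinom n (i - int a))"
    unfolding trinom_def atLeast0_lessThan_Suc
    by (subst card_PiE_insert_Collect) (auto simp: sum_upd algebra_simps finite_PiE intro!: sum.cong arg_cong[where f = card])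
  then show ?thesis by simp
qed

lemma trinom_symmetric: "trinom n (2 * int n - i) = trinom n i"
proof (induction n arbitrary: i)
  case 0
  then show ?case by (simp add: trinom_0)
next
  case (Suc n)
  have "trinom (Suc n) (2 * int (Suc n) - i)
      = trinom n (2 * int n - (i - 2)) + trinom n (2 * int n - (i - 1)) + trinom n (2 * int n - i)"
    unfolding trinom_Suc by (simp add: algebra_simps)
  then show ?case
    unfolding Suc.IH trinom_Suc by simp
qed

lemma trinom_pos: "0 \<le> i \<Longrightarrow> i \<le> 2 * int n \<Longrightarrow> 0 < trinom n i"
proof (induction n arbitrary: i)
  case 0
  then show ?case by (simp add: trinom_0)
next
  case (Suc n)
  show ?case
  proof (cases "i \<le> 2 * int n")
    case True
    then show ?thesis using Suc by (simp add: trinom_Suc)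
  next
    case False
    then have "i - 1 = 2 * int n \<or> (0 \<le> i - 2 \<and> i - 2 \<le> 2 * int n)"
      using Suc.prems by auto
    then show ?thesis
      using Suc.IH[of "i - 1"] Suc.IH[of "i - 2"] by (auto simp: trinom_Suc)
  qed
qed

text \<open>The coefficient of \<open>x\<^sup>k\<close> in \<open>(1 + x + x\<^sup>2) P' = n (1 + 2x) P\<close> for \<open>P = (1 + x + x\<^sup>2)\<^sup>n\<close>.\<close>

lemma trinom_deriv_recurrence:
  "(k + 1) * int (trinom n (k + 1)) = (int n - k) * int (trinom n k) + (2 * int n - k + 1) * int (trinom n (k - 1))"
proof (induction n arbitrary: k)
  case 0
  then show ?case by (auto simp: trinom_0)
next
  case (Suc n)
  have IH0: "(k + 1) * int (trinom n (k + 1)) = (int n - k) * int (trinom n k) + (2 * int n - k + 1) * int (trinom n (k - 1))"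
    by (rule Suc.IH)
  have IH1: "k * int (trinom n k) = (int n - (k - 1)) * int (trinom n (k - 1)) + (2 * int n - k + 2) * int (trinom n (k - 2))"
    using Suc.IH[of "k - 1"] by (simp add: algebra_simps)
  have IH2: "(k - 1) * int (trinom n (k - 1)) = (int n - (k - 2)) * int (trinom n (k - 2)) + (2 * int n - k + 3) * int (trinom n (k - 3))"
    using Suc.IH[of "k - 2"] by (simp add: algebra_simps)
  have "trinom (Suc n) (k + 1) = trinom n (k + 1) + trinom n k + trinom n (k - 1)"
    and "trinom (Suc n) k = trinom n k + trinom n (k - 1) + trinom n (k - 2)"
    and "trinom (Suc n) (k - 1) = trinom n (k - 1) + trinom n (k - 2) + trinom n (k - 3)"
    by (simp_all add: trinom_Suc)
  then show ?case
    using IH0 IH1 IH2 by (simp add: algebra_simps)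
qed

lemma trinom_central_identity:
  "real n * trinom n (int n) = trinom n (int n - 1) + (real n + 2) * trinom n (int n - 2)"
proof -
  have "int n * int (trinom n (int n)) = int (trinom n (int n - 1)) + (int n + 2) * int (trinom n (int n - 2))"
    using trinom_deriv_recurrence[of "int n - 1" n] by (simp add: algebra_simps)
  then have "real_of_int (int n * int (trinom n (int n)))
      = real_of_int (int (trinom n (int n - 1)) + (int n + 2) * int (trinom n (int n - 2)))"
    by (simp only:)
  then show ?thesis by simp
qed

lemma trinom_Suc_central: "trinom (Suc n) (int (Suc n)) = trinom n (int n) + 2 * trinom n (int n - 1)"
proof -
  have "trinom n (int n + 1) = trinom n (int n - 1)"
    using trinom_symmetric[of n "int n - 1"] by (simp add: algebra_simps)
  then show ?thesis
    using trinom_Suc[of n "int n + 1"] by (simp add: add.commute)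
qed

definition ratio_step :: "real \<Rightarrow> real \<Rightarrow> real" where
  "ratio_step x t = (x + 1) * (2 + t) / ((x + 2) * (1 + 2 * t))"

text \<open>
  \<open>ratio_ub\<close> is exactly the value of \<open>b\<^sub>n / a\<^sub>n\<close> at which \<open>b\<^sub>n / c\<^sub>n\<close> reaches the upper bound
  \<open>(4n + 7) / (4n - 2)\<close>; the lower bound needed is \<open>n / (n + 1)\<close>, which \<open>ratio_lb\<close>
  strengthens so that the induction closes.
\<close>

definition ratio_lb :: "real \<Rightarrow> real" where
  "ratio_lb x = (4 * x\<^sup>2 - 3 * x + 2) / (4 * x\<^sup>2)"

definition ratio_ub :: "real \<Rightarrow> real" where
  "ratio_ub x = x * (4 * x + 7) / (4 * x\<^sup>2 + 10 * x + 3)"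

lemma divide_le_divide_iff_cross:
  fixes a b c d :: real
  assumes "0 < b" "0 < d"
  shows "a / b \<le> c / d \<longleftrightarrow> a * d \<le> c * b"
  using assms by (simp add: field_simps)

lemma ratio_step_frac:
  fixes x a b :: real
  assumes "0 < b" "0 \<le> a" "0 \<le> x"
  shows "ratio_step x (a / b) = (x + 1) * (2 * b + a) / ((x + 2) * (b + 2 * a))"
proof -
  have "2 + a / b = (2 * b + a) / b" "1 + 2 * (a / b) = (b + 2 * a) / b"
    using assms by (simp_all add: field_simps)
  then show ?thesis
    unfolding ratio_step_def using assms by simp
qed

lemma ratio_step_antimono:
  fixes x s t :: real
  assumes "0 \<le> s" "s \<le> t" "0 \<le> x"
  shows "ratio_step x t \<le> ratio_step x s"
proof -
  have "(2 + t) / (1 + 2 * t) \<le> (2 + s) / (1 + 2 * s)"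
    using assms by (subst divide_le_divide_iff_cross) (auto simp: algebra_simps)
  then have "(x + 1) / (x + 2) * ((2 + t) / (1 + 2 * t)) \<le> (x + 1) / (x + 2) * ((2 + s) / (1 + 2 * s))"
    using assms by (intro mult_left_mono) auto
  then show ?thesis
    unfolding ratio_step_def by simp
qed

lemma square_ge_five_times:
  fixes x :: real
  shows "5 \<le> x \<Longrightarrow> 5 * x \<le> x\<^sup>2"
  unfolding power2_eq_square by (intro mult_right_mono) auto

lemma ratio_lb_pos:
  fixes x :: real
  shows "5 \<le> x \<Longrightarrow> 0 \<le> ratio_lb x"
  using square_ge_five_times[of x] unfolding ratio_lb_def by simp

lemma ratio_lb_ge:
  fixes x :: real
  assumes "5 \<le> x"
  shows "x / (x + 1) \<le> ratio_lb x"
proof -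
  have "(4 * x\<^sup>2 - 3 * x + 2) * (x + 1) - x * (4 * x\<^sup>2) = x\<^sup>2 - x + 2"
    by (simp add: algebra_simps power2_eq_square)
  then show ?thesis
    using assms square_ge_five_times[OF assms] unfolding ratio_lb_def
    by (subst divide_le_divide_iff_cross) auto
qed

lemma ratio_lb_le_step_ratio_ub:
  fixes x :: real
  assumes "5 \<le> x"
  shows "ratio_lb (x + 1) \<le> ratio_step x (ratio_ub x)"
proof -
  have x2: "5 * x \<le> x\<^sup>2"
    using square_ge_five_times[OF assms] .
  have ub_num: "0 \<le> x * (4 * x + 7)"
    using assms by simp
  have "ratio_lb (x + 1) = (4 * x\<^sup>2 + 5 * x + 3) / (4 * (x + 1)\<^sup>2)"
    unfolding ratio_lb_def by (simp add: algebra_simps power2_eq_square)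
  also have "\<dots> \<le> (x + 1) * (4 * x + 1) / (4 * x\<^sup>2 + 8 * x + 1)"
  proof (subst divide_le_divide_iff_cross)
    show "0 < 4 * (x + 1)\<^sup>2" "0 < 4 * x\<^sup>2 + 8 * x + 1"
      using assms x2 by auto
    have "(x + 1) * (4 * x + 1) * (4 * (x + 1)\<^sup>2) - (4 * x\<^sup>2 + 5 * x + 3) * (4 * x\<^sup>2 + 8 * x + 1)
        = 4 * x\<^sup>2 - x + 1"
      by (simp add: algebra_simps power2_eq_square power3_eq_cube)
    then show "(4 * x\<^sup>2 + 5 * x + 3) * (4 * x\<^sup>2 + 8 * x + 1) \<le> (x + 1) * (4 * x + 1) * (4 * (x + 1)\<^sup>2)"
      using assms x2 by linarith
  qed
  also have "\<dots> = (x + 1) * (2 * (4 * x\<^sup>2 + 10 * x + 3) + x * (4 * x + 7))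
        / ((x + 2) * ((4 * x\<^sup>2 + 10 * x + 3) + 2 * (x * (4 * x + 7))))"
  proof -
    have "0 < (4 * x\<^sup>2 + 10 * x + 3) + 2 * (x * (4 * x + 7))"
      using x2 assms ub_num by linarith
    then have "0 < (x + 2) * ((4 * x\<^sup>2 + 10 * x + 3) + 2 * (x * (4 * x + 7)))"
      using assms by simp
    moreover have "0 < 4 * x\<^sup>2 + 8 * x + 1"
      using assms x2 by simp
    ultimately show ?thesis
      by (simp add: frac_eq_eq algebra_simps power2_eq_square)
  qed
  also have "\<dots> = ratio_step x (ratio_ub x)"
    unfolding ratio_ub_def using assms x2 ub_num by (intro ratio_step_frac[symmetric]) auto
  finally show ?thesis .
qed

lemma ratio_step_ratio_lb_le_ub:
  fixes x :: real
  assumes "5 \<le> x"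
  shows "ratio_step x (ratio_lb x) \<le> ratio_ub (x + 1)"
proof -
  have x2: "5 * x \<le> x\<^sup>2"
    using square_ge_five_times[OF assms] .
  have "ratio_step x (ratio_lb x)
      = (x + 1) * (2 * (4 * x\<^sup>2) + (4 * x\<^sup>2 - 3 * x + 2)) / ((x + 2) * (4 * x\<^sup>2 + 2 * (4 * x\<^sup>2 - 3 * x + 2)))"
    unfolding ratio_lb_def using assms x2 by (intro ratio_step_frac) auto
  also have "\<dots> \<le> (x + 1) * (4 * (x + 1) + 7) / (4 * (x + 1)\<^sup>2 + 10 * (x + 1) + 3)"
  proof (subst divide_le_divide_iff_cross)
    show "0 < (x + 2) * (4 * x\<^sup>2 + 2 * (4 * x\<^sup>2 - 3 * x + 2))" "0 < 4 * (x + 1)\<^sup>2 + 10 * (x + 1) + 3"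
      using assms x2 by (auto intro!: mult_pos_pos add_pos_nonneg)
    have "(x + 1) * (4 * (x + 1) + 7) * ((x + 2) * (4 * x\<^sup>2 + 2 * (4 * x\<^sup>2 - 3 * x + 2)))
        - (x + 1) * (2 * (4 * x\<^sup>2) + (4 * x\<^sup>2 - 3 * x + 2)) * (4 * (x + 1)\<^sup>2 + 10 * (x + 1) + 3)
        = (x + 1) * (8 * (x - 3)\<^sup>2 + 7 * x - 18)"
      by (simp add: algebra_simps power2_eq_square)
    moreover have "0 < 8 * (x - 3)\<^sup>2 + 7 * x - 18"
      using assms zero_le_power2[of "x - 3"] by linarith
    then have "0 < (x + 1) * (8 * (x - 3)\<^sup>2 + 7 * x - 18)"
      using assms by simp
    ultimately show "(x + 1) * (2 * (4 * x\<^sup>2) + (4 * x\<^sup>2 - 3 * x + 2)) * (4 * (x + 1)\<^sup>2 + 10 * (x + 1) + 3)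
        \<le> (x + 1) * (4 * (x + 1) + 7) * ((x + 2) * (4 * x\<^sup>2 + 2 * (4 * x\<^sup>2 - 3 * x + 2)))"
      by linarith
  qed
  also have "\<dots> = ratio_ub (x + 1)"
    unfolding ratio_ub_def ..
  finally show ?thesis .
qed

definition central_ratio :: "nat \<Rightarrow> real" where
  "central_ratio n = trinom n (int n - 1) / trinom n (int n)"

lemma central_ratio_Suc: "central_ratio (Suc n) = ratio_step (real n) (central_ratio n)"
proof -
  define a where "a = real (trinom n (int n))"
  define b where "b = real (trinom n (int n - 1))"
  define c where "c = real (trinom n (int n - 2))"
  have a: "0 < a"
    unfolding a_def using trinom_pos[of "int n" n] by simp
  have b: "0 \<le> b"
    unfolding b_def by simp
  have central: "real n * a = b + (real n + 2) * c"
    unfolding a_def b_def c_def by (rule trinom_central_identity)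
  have "central_ratio (Suc n) = (a + b + c) / (a + 2 * b)"
    unfolding central_ratio_def trinom_Suc_central a_def b_def c_def
    using trinom_Suc[of n "int n"] by simp
  also have "\<dots> = (real n + 1) * (2 * a + b) / ((real n + 2) * (a + 2 * b))"
  proof -
    have "(real n + 2) * (a + b + c) = (real n + 1) * (2 * a + b)"
      using central by (simp add: algebra_simps)
    then show ?thesis
      using a b by (simp add: frac_eq_eq ac_simps)
  qed
  also have "\<dots> = ratio_step (real n) (central_ratio n)"
    unfolding central_ratio_def using a b by (simp add: ratio_step_frac a_def b_def)
  finally show ?thesis .
qed

lemma central_ratio_bounds:
  "5 \<le> n \<Longrightarrow> ratio_lb (real n) \<le> central_ratio n \<and> central_ratio n \<le> ratio_ub (real n)"
proof (induction n rule: nat_induct_at_least)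
  case base
  have "trinom 5 5 = 51" "trinom 5 4 = 45"
    by (simp_all add: numeral_eq_Suc trinom_Suc trinom_0)
  then have "central_ratio 5 = 45 / 51"
    unfolding central_ratio_def by simp
  then show ?case
    unfolding ratio_lb_def ratio_ub_def by simp
next
  case (Suc n)
  have x: "5 \<le> real n"
    using Suc.hyps by simp
  have "0 \<le> central_ratio n"
    unfolding central_ratio_def by simp
  then have "ratio_lb (real n + 1) \<le> ratio_step (real n) (central_ratio n)"
    using ratio_lb_le_step_ratio_ub[OF x] ratio_step_antimono[of "central_ratio n" "ratio_ub n" n] Suc.IH x
    by simp
  moreover have "ratio_step (real n) (central_ratio n) \<le> ratio_ub (real n + 1)"
    using ratio_step_ratio_lb_le_ub[OF x] ratio_step_antimono[of "ratio_lb n" "central_ratio n" n]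
      ratio_lb_pos[OF x] Suc.IH x
    by simp
  ultimately show ?case
    unfolding central_ratio_Suc by (simp add: add.commute)
qed

lemma ratio_bounds_via_central_identity:
  fixes x a b c :: real
  assumes x: "1 \<le> x" and a: "0 < a" and c: "0 < c" and central: "x * a = b + (x + 2) * c"
  shows "x / (x + 1) \<le> b / a \<Longrightarrow> (x + 2) / x \<le> b / c"
    and "b / a \<le> ratio_ub x \<Longrightarrow> b / c \<le> (4 * x + 7) / (4 * x - 2)"
proof -
  assume "x / (x + 1) \<le> b / a"
  then have "x * a \<le> b * (x + 1)"
    using x a by (simp add: divide_le_divide_iff_cross)
  then have "(x + 2) * c \<le> b * x"
    using central by (simp add: algebra_simps)
  then show "(x + 2) / x \<le> b / c"
    using x c by (simp add: divide_le_divide_iff_cross)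
next
  assume "b / a \<le> ratio_ub x"
  moreover have "0 < 4 * x\<^sup>2 + 10 * x + 3"
    using x by (simp add: add_pos_nonneg)
  ultimately have ub: "b * (4 * x\<^sup>2 + 10 * x + 3) \<le> x * (4 * x + 7) * a"
    unfolding ratio_ub_def using a by (simp add: divide_le_divide_iff_cross)
  have "(x + 2) * ((4 * x + 7) * c - b * (4 * x - 2)) = (4 * x + 7) * ((x + 2) * c) - (x + 2) * b * (4 * x - 2)"
    by (simp add: algebra_simps)
  also have "\<dots> = (4 * x + 7) * (x * a - b) - (x + 2) * b * (4 * x - 2)"
    using central by simp
  also have "\<dots> = x * (4 * x + 7) * a - b * (4 * x\<^sup>2 + 10 * x + 3)"
    by (simp add: algebra_simps power2_eq_square)
  finally have "0 \<le> (x + 2) * ((4 * x + 7) * c - b * (4 * x - 2))"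
    using ub by simp
  then have "b * (4 * x - 2) \<le> (4 * x + 7) * c"
    using x by (simp add: zero_le_mult_iff)
  then show "b / c \<le> (4 * x + 7) / (4 * x - 2)"
    using x c by (simp add: divide_le_divide_iff_cross)
qed

theorem mainTheorem16:
  fixes n :: nat
  assumes "n \<ge> 5"
  shows "(real n + 2) / real n \<le> real (ell (n - 1) n) / real (ell (n - 2) n)
         \<and> real (ell (n - 1) n) / real (ell (n - 2) n) \<le> (4 * real n + 7) / (4 * real n - 2)"
proof -
  have ell: "ell (n - 1) n = trinom n (int n - 1)" "ell (n - 2) n = trinom n (int n - 2)"
    using assms by (simp_all add: ell_eq_trinom of_nat_diff)
  have a: "0 < real (trinom n (int n))" and c: "0 < real (trinom n (int n - 2))"
    using trinom_pos[of "int n" n] trinom_pos[of "int n - 2" n] assms by simp_all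
  have x: "1 \<le> real n"
    using assms by simp
  note bounds = central_ratio_bounds[OF assms, unfolded central_ratio_def]
  show ?thesis
    unfolding ell
    using ratio_bounds_via_central_identity[OF x a c trinom_central_identity] bounds
      ratio_lb_ge[of "real n"] assms
    by fastforce
qed

end
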